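(* Let $n\ge1$ be an integer. For each $k\in[n]$ let $G_k$ be a graph with perfect state transfer from vertex $a_k$ to vertex $b_k$ at a common time $t$ (when $a_k=b_k$ this means $G_k$ is periodic at $a_k$ at time $t>0$), where $a_k\neq b_k$ for at least one $k$. For each $k$, let $\pi_k$ be an equitable partition of $G_k$ in which $a_k$ and $b_k$ lie in singleton cells, with normalized partition matrix $Q_k$. Let $\pi$ be the equitable partition of $\square_{k}G_k$ with normalized partition matrix $\bigotimes_k Q_k$. Then \[ \square_{k=1}^n (G_k/\pi_k)\;\cong\;\Big(\square_{k=1}^n G_k\Big)/\pi, \] and this graph has perfect state transfer between (the cells of) $(a_1,\dots,a_n)$ and $(b_1,\dots,b_n)$ at time $t$.
   Context: Graphs are finite and undirected with adjacency matrix $A$; a graph has perfect state transfer from $u$ to $v$ at time $t$ if $|\langle v|e^{-itA}|u\rangle|=1$, where $|u\rangle$ is the standard basis vector of $u$; it is periodic at $u$ if this holds with $v=u$ for some $t>0$. The Cartesian product has adjacency matrix $A(G)\otimes I+I\otimes A(H)$. A partition $V_1\uplus\cdots\uplus V_m$ is equitable if each vertex of $V_j$ has a constant number $d_{j,k}$ of neighbours in $V_k$; the normalized partition matrix is $Q_{x,j}=|V_j|^{-1/2}[x\in V_j]$; the quotient $G/\pi$ is the weighted graph on the cells with adjacency matrix $Q^TA(G)Q$ (entries $\sqrt{d_{j,k}d_{k,j}}$). *)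

theory Defs
  imports Complex_Main
begin

definition simple_graph :: "'a set \<Rightarrow> ('a \<Rightarrow> 'a \<Rightarrow> bool) \<Rightarrow> bool" where
  "simple_graph V E \<longleftrightarrow> finite V \<and> V \<noteq> {} \<and>
     (\<forall>x y. E x y \<longrightarrow> x \<in> V \<and> y \<in> V) \<and>
     (\<forall>x y. E x y \<longrightarrow> E y x) \<and> (\<forall>x. \<not> E x x)"

definition adj :: "('a \<Rightarrow> 'a \<Rightarrow> bool) \<Rightarrow> 'a \<Rightarrow> 'a \<Rightarrow> real" where
  "adj E x y = (if E x y then 1 else 0)"

fun mpow :: "'v set \<Rightarrow> ('v \<Rightarrow> 'v \<Rightarrow> real) \<Rightarrow> nat \<Rightarrow> 'v \<Rightarrow> 'v \<Rightarrow> real" where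
  "mpow S A 0 x y = (if x = y then 1 else 0)"
| "mpow S A (Suc m) x y = (\<Sum>z\<in>S. A x z * mpow S A m z y)"

text \<open>The entry  < v | exp(-itA) | u >  of the transition matrix (entrywise exponential series).\<close>
definition transition :: "'v set \<Rightarrow> ('v \<Rightarrow> 'v \<Rightarrow> real) \<Rightarrow> real \<Rightarrow> 'v \<Rightarrow> 'v \<Rightarrow> complex" where
  "transition S A t u v = (\<Sum>m. (- \<i> * complex_of_real t) ^ m / of_nat (fact m) * complex_of_real (mpow S A m v u))"

definition pst :: "'v set \<Rightarrow> ('v \<Rightarrow> 'v \<Rightarrow> real) \<Rightarrow> 'v \<Rightarrow> 'v \<Rightarrow> real \<Rightarrow> bool" where
  "pst S A u v t \<longleftrightarrow> u \<in> S \<and> v \<in> S \<and> cmod (transition S A t u v) = 1"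

definition is_partition :: "'a set \<Rightarrow> 'a set set \<Rightarrow> bool" where
  "is_partition V P \<longleftrightarrow> (\<forall>C\<in>P. C \<noteq> {}) \<and> \<Union>P = V \<and>
     (\<forall>C\<in>P. \<forall>D\<in>P. C \<noteq> D \<longrightarrow> C \<inter> D = {})"

definition equitable :: "'a set \<Rightarrow> ('a \<Rightarrow> 'a \<Rightarrow> real) \<Rightarrow> 'a set set \<Rightarrow> bool" where
  "equitable V A P \<longleftrightarrow> is_partition V P \<and>
     (\<forall>C\<in>P. \<forall>D\<in>P. \<forall>x\<in>C. \<forall>y\<in>C. (\<Sum>z\<in>D. A x z) = (\<Sum>z\<in>D. A y z))"

text \<open>Quotient adjacency matrix Q^T A Q (Q the normalized partition matrix), on the cells.\<close>
definition qadj :: "('a \<Rightarrow> 'a \<Rightarrow> real) \<Rightarrow> 'a set \<Rightarrow> 'a set \<Rightarrow> real" where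
  "qadj A C D = (\<Sum>x\<in>C. \<Sum>y\<in>D. A x y) / sqrt (real (card C) * real (card D))"

text \<open>Cartesian product of n weighted graphs (Vs k, As k), k < n; vertices are lists of length n.\<close>
definition cp_verts :: "nat \<Rightarrow> (nat \<Rightarrow> 'v set) \<Rightarrow> 'v list set" where
  "cp_verts n Vs = {xs. length xs = n \<and> (\<forall>k<n. xs ! k \<in> Vs k)}"

definition cp_adj :: "nat \<Rightarrow> (nat \<Rightarrow> 'v \<Rightarrow> 'v \<Rightarrow> real) \<Rightarrow> 'v list \<Rightarrow> 'v list \<Rightarrow> real" where
  "cp_adj n As xs ys = (\<Sum>k<n. if (\<forall>j<n. j \<noteq> k \<longrightarrow> xs ! j = ys ! j) then As k (xs ! k) (ys ! k) else 0)"

text \<open>Product cell C_1 x ... x C_n, and the product partition pi (normalized matrix = Kronecker product of the Q_k).\<close>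
definition prod_cell :: "nat \<Rightarrow> 'a set list \<Rightarrow> 'a list set" where
  "prod_cell n Cs = {xs. length xs = n \<and> (\<forall>k<n. xs ! k \<in> Cs ! k)}"

definition prod_partition :: "nat \<Rightarrow> (nat \<Rightarrow> 'a set set) \<Rightarrow> 'a list set set" where
  "prod_partition n P = prod_cell n ` cp_verts n P"

end

theory Submission
  imports Defs
begin

text \<open>The adjacency matrix of a Cartesian product is A \<otimes> I + I \<otimes> B with commuting
  summands, so its transition matrix is the tensor product of those of the factors and the
  transfer amplitude between product vertices is the product of the factors' amplitudes.
  For an equitable partition with normalized matrix Q one has A Q = Q (Q^T A Q), hence
  exp(-itA) Q = Q exp(-itQ^T A Q); between singleton cells the quotient therefore has the same
  amplitude as the graph itself. Finally, the product of the partitions is equitable in the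
  product graph, and its quotient is the product of the quotients, since each cell is a
  product of cells.\<close>

section \<open>Transition matrices of Cartesian products\<close>

lemma mpow_abs_le:
  assumes "finite S" "x \<in> S"
  shows "\<bar>mpow S A m x y\<bar> \<le> (1 + (\<Sum>x\<in>S. \<Sum>z\<in>S. \<bar>A x z\<bar>)) ^ m"
  using assms(2)
proof (induction m arbitrary: x)
  case 0
  then show ?case by simp
next
  case (Suc m)
  define M where "M = 1 + (\<Sum>x\<in>S. \<Sum>z\<in>S. \<bar>A x z\<bar>)"
  have "M \<ge> 0" unfolding M_def by (simp add: sum_nonneg add_nonneg_nonneg)
  have row_le: "(\<Sum>z\<in>S. \<bar>A x z\<bar>) \<le> M"
    using member_le_sum[of x S "\<lambda>x. \<Sum>z\<in>S. \<bar>A x z\<bar>"] Suc.prems assms(1)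
    unfolding M_def by (simp add: sum_nonneg)
  have "\<bar>mpow S A (Suc m) x y\<bar> \<le> (\<Sum>z\<in>S. \<bar>A x z\<bar> * \<bar>mpow S A m z y\<bar>)"
    by (simp add: abs_mult[symmetric] sum_abs)
  also have "\<dots> \<le> (\<Sum>z\<in>S. \<bar>A x z\<bar> * M ^ m)"
    by (rule sum_mono) (use Suc.IH M_def in \<open>auto intro: mult_left_mono\<close>)
  also have "\<dots> = (\<Sum>z\<in>S. \<bar>A x z\<bar>) * M ^ m" by (simp add: sum_distrib_right)
  also have "\<dots> \<le> M * M ^ m" using row_le \<open>M \<ge> 0\<close> by (simp add: mult_right_mono)
  finally show ?case unfolding M_def by simp
qed

lemma summable_norm_transition_series:
  assumes "finite S" "v \<in> S"
  shows "summable (\<lambda>m. norm ((- \<i> * complex_of_real t) ^ m / of_nat (fact m)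
           * complex_of_real (mpow S A m v u)))"
proof -
  define M where "M = 1 + (\<Sum>x\<in>S. \<Sum>z\<in>S. \<bar>A x z\<bar>)"
  show ?thesis
  proof (rule summable_comparison_test[OF _ summable_exp[of "\<bar>t\<bar> * M"]], intro exI allI impI)
    fix m :: nat
    have "norm (norm ((- \<i> * complex_of_real t) ^ m / of_nat (fact m) * complex_of_real (mpow S A m v u)))
        = \<bar>t\<bar> ^ m / fact m * \<bar>mpow S A m v u\<bar>"
      by (simp add: norm_mult norm_divide norm_power)
    also have "\<dots> \<le> \<bar>t\<bar> ^ m / fact m * M ^ m"
      by (rule mult_left_mono) (use mpow_abs_le[OF assms, of A m u] M_def in auto)
    also have "\<dots> = inverse (fact m) * (\<bar>t\<bar> * M) ^ m"
      by (simp add: power_mult_distrib field_simps)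
    finally show "norm (norm ((- \<i> * complex_of_real t) ^ m / of_nat (fact m)
        * complex_of_real (mpow S A m v u))) \<le> inverse (fact m) * (\<bar>t\<bar> * M) ^ m" .
  qed
qed

definition cart_adj :: "('u \<Rightarrow> 'u \<Rightarrow> real) \<Rightarrow> ('w \<Rightarrow> 'w \<Rightarrow> real) \<Rightarrow> 'u \<times> 'w \<Rightarrow> 'u \<times> 'w \<Rightarrow> real" where
  "cart_adj A B p q = A (fst p) (fst q) * (if snd p = snd q then 1 else 0)
     + (if fst p = fst q then 1 else 0) * B (snd p) (snd q)"

lemma binomial_convolution_Suc:
  fixes \<alpha> \<beta> :: "nat \<Rightarrow> real"
  shows "(\<Sum>j\<le>m. real (m choose j) * \<alpha> (Suc j) * \<beta> (m - j))
       + (\<Sum>j\<le>m. real (m choose j) * \<alpha> j * \<beta> (Suc m - j))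
       = (\<Sum>j\<le>Suc m. real (Suc m choose j) * \<alpha> j * \<beta> (Suc m - j))"
proof -
  have "(\<Sum>j\<le>Suc m. real (Suc m choose j) * \<alpha> j * \<beta> (Suc m - j))
      = \<alpha> 0 * \<beta> (Suc m) + (\<Sum>j\<le>m. real (m choose Suc j) * \<alpha> (Suc j) * \<beta> (m - j))
      + (\<Sum>j\<le>m. real (m choose j) * \<alpha> (Suc j) * \<beta> (m - j))"
    by (subst sum.atMost_Suc_shift) (simp add: sum.distrib algebra_simps)
  also have "\<alpha> 0 * \<beta> (Suc m) + (\<Sum>j\<le>m. real (m choose Suc j) * \<alpha> (Suc j) * \<beta> (m - j))
      = (\<Sum>j\<le>Suc m. real (m choose j) * \<alpha> j * \<beta> (Suc m - j))"
    by (subst sum.atMost_Suc_shift[of _ m]) simp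
  finally show ?thesis by simp
qed

lemma mpow_cart_adj:
  assumes "finite S" "finite T" "x \<in> S" "u \<in> T"
  shows "mpow (S \<times> T) (cart_adj A B) m (x, u) (y, v)
       = (\<Sum>j\<le>m. real (m choose j) * mpow S A j x y * mpow T B (m - j) u v)"
  using assms(3,4)
proof (induction m arbitrary: x u)
  case 0
  then show ?case by simp
next
  case (Suc m)
  let ?M = "mpow (S \<times> T) (cart_adj A B) m"
  have "mpow (S \<times> T) (cart_adj A B) (Suc m) (x, u) (y, v)
      = (\<Sum>z\<in>S. \<Sum>w\<in>T. cart_adj A B (x, u) (z, w) * ?M (z, w) (y, v))"
    by (simp add: sum.cartesian_product)
  also have "\<dots> = (\<Sum>z\<in>S. \<Sum>w\<in>T. (A x z * (if u = w then 1 else 0)) * ?M (z, w) (y, v))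
      + (\<Sum>z\<in>S. \<Sum>w\<in>T. ((if x = z then 1 else 0) * B u w) * ?M (z, w) (y, v))"
    by (simp add: cart_adj_def sum.distrib distrib_right)
  also have "\<dots> = (\<Sum>z\<in>S. A x z * ?M (z, u) (y, v)) + (\<Sum>w\<in>T. B u w * ?M (x, w) (y, v))"
    using Suc.prems assms(1,2)
    by (simp add: if_distrib if_distribR sum.If_cases sum.swap[of _ S T] cong: if_cong)
  also have "\<dots> = (\<Sum>j\<le>m. real (m choose j) * mpow S A (Suc j) x y * mpow T B (m - j) u v)
     + (\<Sum>j\<le>m. real (m choose j) * mpow S A j x y * mpow T B (Suc (m - j)) u v)"
    using Suc by (simp add: sum_distrib_left sum_distrib_right sum.swap[of _ S] sum.swap[of _ T]
        algebra_simps)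
  also have "\<dots> = (\<Sum>j\<le>m. real (m choose j) * mpow S A (Suc j) x y * mpow T B (m - j) u v)
     + (\<Sum>j\<le>m. real (m choose j) * mpow S A j x y * mpow T B (Suc m - j) u v)"
    by (intro arg_cong2[where f="(+)"] refl sum.cong) (auto simp: Suc_diff_le)
  also have "\<dots> = (\<Sum>j\<le>Suc m. real (Suc m choose j) * mpow S A j x y * mpow T B (Suc m - j) u v)"
    by (rule binomial_convolution_Suc)
  finally show ?case .
qed

lemma transition_cart_adj:
  assumes "finite S" "finite T" "y \<in> S" "v \<in> T"
  shows "transition (S \<times> T) (cart_adj A B) t (x, u) (y, v) = transition S A t x y * transition T B t u v"
proof -
  define c where "c = - \<i> * complex_of_real t"
  define a where "a = (\<lambda>m. c ^ m / of_nat (fact m) * complex_of_real (mpow S A m y x))"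
  define b where "b = (\<lambda>m. c ^ m / of_nat (fact m) * complex_of_real (mpow T B m v u))"
  have "transition S A t x y * transition T B t u v = (\<Sum>k. a k) * (\<Sum>k. b k)"
    unfolding transition_def a_def b_def c_def ..
  also have "\<dots> = (\<Sum>k. \<Sum>i\<le>k. a i * b (k - i))"
    using summable_norm_transition_series[OF assms(1,3)] summable_norm_transition_series[OF assms(2,4)]
    unfolding a_def b_def c_def by (rule Cauchy_product)
  also have "\<dots> = transition (S \<times> T) (cart_adj A B) t (x, u) (y, v)"
    unfolding transition_def
  proof (rule suminf_cong)
    fix k
    have "a i * b (k - i) = c ^ k / of_nat (fact k)
            * complex_of_real (real (k choose i) * mpow S A i y x * mpow T B (k - i) v u)"
      if "i \<le> k" for i
    proof -
      have "(of_nat (k choose i) :: complex) = fact k / (fact i * fact (k - i))"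
        by (rule binomial_fact[OF that])
      moreover have "c ^ k = c ^ i * c ^ (k - i)" using that by (simp add: power_add[symmetric])
      ultimately show ?thesis unfolding a_def b_def by (simp add: field_simps)
    qed
    then have "(\<Sum>i\<le>k. a i * b (k - i))
        = c ^ k / of_nat (fact k) * complex_of_real (mpow (S \<times> T) (cart_adj A B) k (y, v) (x, u))"
      by (simp add: mpow_cart_adj[OF assms] sum_distrib_left)
    then show "(\<Sum>i\<le>k. a i * b (k - i)) = (- \<i> * complex_of_real t) ^ k / of_nat (fact k)
        * complex_of_real (mpow (S \<times> T) (cart_adj A B) k (y, v) (x, u))"
      unfolding c_def .
  qed
  finally show ?thesis ..
qed

lemma mpow_iso:
  assumes "bij_betw f S S'" "\<And>x y. x \<in> S \<Longrightarrow> y \<in> S \<Longrightarrow> A' (f x) (f y) = A x y"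
    and "x \<in> S" "y \<in> S"
  shows "mpow S' A' m (f x) (f y) = mpow S A m x y"
  using assms(3)
proof (induction m arbitrary: x)
  case 0
  have "f x = f y \<longleftrightarrow> x = y" using assms(1,4) 0 by (metis bij_betw_iff_bijections)
  then show ?case by simp
next
  case (Suc m)
  have "mpow S' A' (Suc m) (f x) (f y) = (\<Sum>z\<in>f ` S. A' (f x) z * mpow S' A' m z (f y))"
    using assms(1) by (simp add: bij_betw_def)
  also have "\<dots> = (\<Sum>z\<in>S. A' (f x) (f z) * mpow S' A' m (f z) (f y))"
    using assms(1) unfolding bij_betw_def by (metis (no_types, lifting) sum.reindex_cong)
  also have "\<dots> = mpow S A (Suc m) x y"
    using Suc assms(2) by simp
  finally show ?case .
qed

lemma transition_iso:
  assumes "bij_betw f S S'" "\<And>x y. x \<in> S \<Longrightarrow> y \<in> S \<Longrightarrow> A' (f x) (f y) = A x y"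
    and "x \<in> S" "y \<in> S"
  shows "transition S' A' t (f x) (f y) = transition S A t x y"
proof -
  have "mpow S' A' m (f y) (f x) = mpow S A m y x" for m
    by (rule mpow_iso[of f S S' A' A]) (use assms in auto)
  then show ?thesis unfolding transition_def by simp
qed

lemma prod_cell_eq_cp_verts: "prod_cell n Cs = cp_verts n (\<lambda>k. Cs ! k)"
  unfolding prod_cell_def cp_verts_def by simp

lemma finite_cp_verts:
  assumes "\<forall>k<n. finite (F k)"
  shows "finite (cp_verts n F)"
proof (rule finite_subset)
  show "cp_verts n F \<subseteq> {xs. set xs \<subseteq> (\<Union>k<n. F k) \<and> length xs = n}"
    unfolding cp_verts_def by (force simp: in_set_conv_nth)
  show "finite {xs. set xs \<subseteq> (\<Union>k<n. F k) \<and> length xs = n}"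
    by (rule finite_lists_length_eq) (use assms in auto)
qed

lemma bij_betw_snoc_cp_verts:
  "bij_betw (\<lambda>(xs, x). xs @ [x]) (cp_verts n F \<times> F n) (cp_verts (Suc n) F)"
proof (rule bij_betw_byWitness[where f'="\<lambda>xs. (take n xs, xs ! n)"])
  show "(\<lambda>(xs, x). xs @ [x]) ` (cp_verts n F \<times> F n) \<subseteq> cp_verts (Suc n) F"
    by (auto simp: cp_verts_def nth_append less_Suc_eq)
  show "(\<lambda>xs. (take n xs, xs ! n)) ` cp_verts (Suc n) F \<subseteq> cp_verts n F \<times> F n"
    by (auto simp: cp_verts_def)
qed (auto simp: cp_verts_def take_Suc_conv_app_nth[symmetric])

lemma card_cp_verts:
  assumes "\<forall>k<n. finite (F k)"
  shows "card (cp_verts n F) = (\<Prod>k<n. card (F k))"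
  using assms
proof (induction n)
  case 0
  have "cp_verts 0 F = {[]}" by (auto simp: cp_verts_def)
  then show ?case by simp
next
  case (Suc n)
  have "card (cp_verts (Suc n) F) = card (cp_verts n F \<times> F n)"
    using bij_betw_same_card[OF bij_betw_snoc_cp_verts[of n F]] by simp
  then show ?case using Suc by (simp add: card_cartesian_product)
qed

lemma cp_adj_snoc:
  assumes "length xs = n" "length ys = n"
  shows "cp_adj (Suc n) As (xs @ [x]) (ys @ [y]) = cart_adj (cp_adj n As) (As n) (xs, x) (ys, y)"
proof -
  have off_last: "(if \<forall>j<Suc n. j \<noteq> k \<longrightarrow> (xs @ [x]) ! j = (ys @ [y]) ! j
        then As k ((xs @ [x]) ! k) ((ys @ [y]) ! k) else 0)
      = (if \<forall>j<n. j \<noteq> k \<longrightarrow> xs ! j = ys ! j then As k (xs ! k) (ys ! k) else 0)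
        * (if x = y then 1 else 0)" if "k < n" for k
    using assms that by (auto simp: nth_append less_Suc_eq)
  have last: "(if \<forall>j<Suc n. j \<noteq> n \<longrightarrow> (xs @ [x]) ! j = (ys @ [y]) ! j
        then As n ((xs @ [x]) ! n) ((ys @ [y]) ! n) else 0)
      = (if xs = ys then 1 else 0) * As n x y"
    using assms by (auto simp: nth_append less_Suc_eq list_eq_iff_nth_eq)
  have "cp_adj (Suc n) As (xs @ [x]) (ys @ [y])
      = (\<Sum>k<n. (if \<forall>j<n. j \<noteq> k \<longrightarrow> xs ! j = ys ! j then As k (xs ! k) (ys ! k) else 0)
          * (if x = y then 1 else 0)) + (if xs = ys then 1 else 0) * As n x y"
    unfolding cp_adj_def sum.lessThan_Suc last by (simp add: off_last)
  then show ?thesis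
    unfolding cart_adj_def by (simp add: cp_adj_def[of n] sum_distrib_right)
qed

lemma transition_cp_adj:
  assumes "\<forall>k<n. finite (F k)" "xs \<in> cp_verts n F" "ys \<in> cp_verts n F"
  shows "transition (cp_verts n F) (cp_adj n As) t xs ys
       = (\<Prod>k<n. transition (F k) (As k) t (xs ! k) (ys ! k))"
  using assms
proof (induction n arbitrary: xs ys)
  case 0
  have "xs = []" "ys = []" "cp_verts 0 F = {[]}" using 0 by (auto simp: cp_verts_def)
  moreover have "mpow {[]} (cp_adj 0 As) m [] [] = (if m = 0 then 1 else 0)" for m
    by (cases m) (auto simp: cp_adj_def)
  then have "(\<lambda>m. (- \<i> * complex_of_real t) ^ m / of_nat (fact m)
      * complex_of_real (mpow {[]} (cp_adj 0 As) m [] [])) = (\<lambda>m. if m = 0 then 1 else 0)"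
    by auto
  ultimately show ?case
    unfolding transition_def using sums_single[of 0 "\<lambda>_. 1::complex"] by (simp add: sums_iff)
next
  case (Suc n)
  have fin: "finite (cp_verts n F)" "finite (F n)"
    using Suc.prems(1) finite_cp_verts[of n F] by auto
  have split: "zs = take n zs @ [zs ! n]" "take n zs \<in> cp_verts n F" "zs ! n \<in> F n"
    if "zs \<in> cp_verts (Suc n) F" for zs
    using that by (auto simp: cp_verts_def take_Suc_conv_app_nth[symmetric])
  note xs = split[OF Suc.prems(2)] and ys = split[OF Suc.prems(3)]
  have "transition (cp_verts (Suc n) F) (cp_adj (Suc n) As) t xs ys
      = transition (cp_verts (Suc n) F) (cp_adj (Suc n) As) t
          ((\<lambda>(xs, x). xs @ [x]) (take n xs, xs ! n)) ((\<lambda>(xs, x). xs @ [x]) (take n ys, ys ! n))"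
    using xs(1) ys(1) by simp
  also have "\<dots> = transition (cp_verts n F \<times> F n) (cart_adj (cp_adj n As) (As n)) t
      (take n xs, xs ! n) (take n ys, ys ! n)"
    by (rule transition_iso[OF bij_betw_snoc_cp_verts])
      (use xs ys in \<open>auto simp: cp_adj_snoc cp_verts_def\<close>)
  also have "\<dots> = transition (cp_verts n F) (cp_adj n As) t (take n xs) (take n ys)
      * transition (F n) (As n) t (xs ! n) (ys ! n)"
    by (rule transition_cart_adj[OF fin ys(2,3)])
  also have "\<dots> = (\<Prod>k<Suc n. transition (F k) (As k) t (xs ! k) (ys ! k))"
    using Suc.IH[OF _ xs(2) ys(2)] Suc.prems(1) Suc.prems(2) by (simp add: cp_verts_def)
  finally show ?case .
qed

lemma pst_cp_adj:
  assumes "\<forall>k<n. finite (V k)" "\<forall>k<n. pst (V k) (A k) (a k) (b k) t"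
  shows "pst (cp_verts n V) (cp_adj n A) (map a [0..<n]) (map b [0..<n]) t"
proof -
  have ab: "map a [0..<n] \<in> cp_verts n V" "map b [0..<n] \<in> cp_verts n V"
    using assms(2) by (auto simp: cp_verts_def pst_def)
  have "cmod (transition (cp_verts n V) (cp_adj n A) t (map a [0..<n]) (map b [0..<n]))
      = (\<Prod>k<n. cmod (transition (V k) (A k) t (a k) (b k)))"
    by (simp add: transition_cp_adj[OF assms(1) ab] prod_norm)
  also have "\<dots> = 1"
    using assms(2) by (simp add: pst_def)
  finally show ?thesis using ab unfolding pst_def by blast
qed

section \<open>Equitable quotients\<close>

lemma finite_partition: "finite S \<Longrightarrow> is_partition S P \<Longrightarrow> finite P"
  unfolding is_partition_def by (metis Union_upper finite_UnionD)

lemma partition_cellD: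
  assumes "finite S" "is_partition S P" "C \<in> P"
  shows "finite C" "C \<subseteq> S" "card C > 0"
  using assms unfolding is_partition_def by (auto intro: finite_subset simp: card_gt_0_iff)

lemma partition_cell_eq_iff:
  "is_partition S P \<Longrightarrow> C \<in> P \<Longrightarrow> D \<in> P \<Longrightarrow> x \<in> C \<Longrightarrow> x \<in> D \<longleftrightarrow> C = D"
  unfolding is_partition_def by blast

lemma sum_partition:
  assumes "finite S" "is_partition S P"
  shows "sum f S = (\<Sum>C\<in>P. sum f C)"
proof -
  have "S = \<Union>P" using assms(2) unfolding is_partition_def by auto
  then show ?thesis
    using sum.Union_disjoint[of P f] finite_partition[OF assms] partition_cellD[OF assms] assms(2)
    unfolding is_partition_def by (simp add: comp_def)
qed

text \<open>The constant d(C,D) of an equitable partition, written as an average over C so that it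
  is defined for every pair of sets.\<close>
definition cell_degree :: "('a \<Rightarrow> 'a \<Rightarrow> real) \<Rightarrow> 'a set \<Rightarrow> 'a set \<Rightarrow> real" where
  "cell_degree A C D = (\<Sum>x\<in>C. \<Sum>y\<in>D. A x y) / card C"

lemma qadj_eq_cell_degree: "qadj A C D = sqrt (card C / card D) * cell_degree A C D"
  unfolding qadj_def cell_degree_def
  by (cases "card C = 0"; cases "card D = 0") (auto simp: real_sqrt_mult real_sqrt_divide field_simps)

lemma equitable_row_sum:
  assumes "finite S" "equitable S A P" "C \<in> P" "D \<in> P" "x \<in> C"
  shows "(\<Sum>y\<in>D. A x y) = cell_degree A C D"
proof -
  have P: "is_partition S P" using assms(2) unfolding equitable_def by blast
  have "\<forall>v\<in>C. (\<Sum>y\<in>D. A v y) = (\<Sum>y\<in>D. A x y)"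
    using assms(2-5) unfolding equitable_def by blast
  then have "(\<Sum>v\<in>C. \<Sum>y\<in>D. A v y) = card C * (\<Sum>y\<in>D. A x y)"
    by simp
  then show ?thesis
    using partition_cellD(3)[OF assms(1) P assms(3)] unfolding cell_degree_def by simp
qed

text \<open>The identity A^m Q = Q B^m for the quotient matrix B = Q^T A Q, read at row x and column D.\<close>
lemma mpow_quotient:
  assumes "finite S" "equitable S A P" "C \<in> P" "x \<in> C" "D \<in> P"
  shows "(\<Sum>y\<in>D. mpow S A m x y) / sqrt (card D) = mpow P (qadj A) m C D / sqrt (card C)"
proof -
  have part: "is_partition S P" using assms(2) unfolding equitable_def by blast
  show ?thesis
    using assms(3-5)
  proof (induction m arbitrary: C x D)
    case 0
    have "(\<Sum>y\<in>D. mpow S A 0 x y) = (if x \<in> D then 1 else 0)"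
      using partition_cellD(1)[OF assms(1) part 0(3)] by simp
    then show ?case using partition_cell_eq_iff[OF part 0(1,3,2)] by auto
  next
    case (Suc m)
    have "(\<Sum>y\<in>D. mpow S A (Suc m) x y) / sqrt (card D)
        = (\<Sum>z\<in>S. A x z * ((\<Sum>y\<in>D. mpow S A m z y) / sqrt (card D)))"
      by (simp add: sum.swap[of _ D S] sum_distrib_left sum_divide_distrib)
    also have "\<dots> = (\<Sum>C'\<in>P. \<Sum>z\<in>C'. A x z * ((\<Sum>y\<in>D. mpow S A m z y) / sqrt (card D)))"
      by (rule sum_partition[OF assms(1) part])
    also have "\<dots> = (\<Sum>C'\<in>P. (\<Sum>z\<in>C'. A x z) / sqrt (card C') * mpow P (qadj A) m C' D)"
      using Suc.IH[OF _ _ Suc.prems(3)] by (simp add: sum_distrib_right sum_divide_distrib)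
    also have "\<dots> = (\<Sum>C'\<in>P. qadj A C C' / sqrt (card C) * mpow P (qadj A) m C' D)"
    proof (rule sum.cong[OF refl])
      fix C' assume "C' \<in> P"
      moreover have "card C > 0" using partition_cellD(3)[OF assms(1) part Suc.prems(1)] .
      ultimately show "(\<Sum>z\<in>C'. A x z) / sqrt (card C') * mpow P (qadj A) m C' D
          = qadj A C C' / sqrt (card C) * mpow P (qadj A) m C' D"
        using equitable_row_sum[OF assms(1,2) Suc.prems(1) _ Suc.prems(2)]
        by (simp add: qadj_eq_cell_degree real_sqrt_divide)
    qed
    also have "\<dots> = mpow P (qadj A) (Suc m) C D / sqrt (card C)"
      by (simp add: sum_divide_distrib)
    finally show ?case .
  qed
qed

lemma pst_quotient_iff:
  assumes "finite S" "equitable S A P" "{a} \<in> P" "{b} \<in> P"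
  shows "pst P (qadj A) {a} {b} t \<longleftrightarrow> pst S A a b t"
proof -
  have "mpow P (qadj A) m {b} {a} = mpow S A m b a" for m
    using mpow_quotient[OF assms(1,2,4) _ assms(3)] by simp
  moreover have "a \<in> S" "b \<in> S"
    using assms unfolding equitable_def is_partition_def by auto
  ultimately show ?thesis
    using assms(3,4) unfolding pst_def transition_def by simp
qed

section \<open>Product partitions\<close>

lemma sum_cp_verts_agree_off:
  assumes "k < n" "length x = n" "\<forall>j<n. finite (F j)"
  shows "(\<Sum>z\<in>cp_verts n F. if \<forall>j<n. j \<noteq> k \<longrightarrow> x ! j = z ! j then g (z ! k) else 0)
       = (if \<forall>j<n. j \<noteq> k \<longrightarrow> x ! j \<in> F j then (\<Sum>w\<in>F k. g w) else 0)"
proof -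
  let ?Z = "{z \<in> cp_verts n F. \<forall>j<n. j \<noteq> k \<longrightarrow> x ! j = z ! j}"
  have "(\<Sum>z\<in>cp_verts n F. if \<forall>j<n. j \<noteq> k \<longrightarrow> x ! j = z ! j then g (z ! k) else 0)
      = (\<Sum>z\<in>?Z. g (z ! k))"
    by (rule sum.inter_filter[OF finite_cp_verts[OF assms(3)], symmetric])
  also have "\<dots> = (if \<forall>j<n. j \<noteq> k \<longrightarrow> x ! j \<in> F j then (\<Sum>w\<in>F k. g w) else 0)"
  proof (cases "\<forall>j<n. j \<noteq> k \<longrightarrow> x ! j \<in> F j")
    case True
    have "?Z = (\<lambda>w. x[k := w]) ` F k"
    proof (intro set_eqI iffI)
      fix z assume z: "z \<in> ?Z"
      then have "z = x[k := z ! k]"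
        using assms(1,2) unfolding cp_verts_def list_eq_iff_nth_eq by (auto simp: nth_list_update)
      moreover have "z ! k \<in> F k" using z assms(1) by (auto simp: cp_verts_def)
      ultimately show "z \<in> (\<lambda>w. x[k := w]) ` F k" by blast
    qed (use True assms(1,2) in \<open>auto simp: cp_verts_def nth_list_update\<close>)
    moreover have "inj_on (\<lambda>w. x[k := w]) (F k)"
      by (rule inj_onI) (metis assms(1,2) nth_list_update_eq)
    ultimately show ?thesis
      using True assms(1,2) by (simp add: sum.reindex)
  next
    case False
    then have "?Z = {}" by (auto simp: cp_verts_def)
    then show ?thesis using False by (simp only: sum.empty if_False)
  qed
  finally show ?thesis .
qed

lemma sum_cp_adj_row:
  assumes "length x = n" "\<forall>j<n. finite (F j)"
  shows "(\<Sum>z\<in>cp_verts n F. cp_adj n As x z)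
       = (\<Sum>k<n. if \<forall>j<n. j \<noteq> k \<longrightarrow> x ! j \<in> F j then (\<Sum>w\<in>F k. As k (x ! k) w) else 0)"
  unfolding cp_adj_def
  by (subst sum.swap) (rule sum.cong[OF refl], rule sum_cp_verts_agree_off, use assms in auto)

locale equitable_family =
  fixes n :: nat and V :: "nat \<Rightarrow> 'a set" and A :: "nat \<Rightarrow> 'a \<Rightarrow> 'a \<Rightarrow> real"
    and P :: "nat \<Rightarrow> 'a set set"
  assumes finite_V: "k < n \<Longrightarrow> finite (V k)"
    and equitable_P: "k < n \<Longrightarrow> equitable (V k) (A k) (P k)"
begin

lemma partition_P: "k < n \<Longrightarrow> is_partition (V k) (P k)"
  using equitable_P unfolding equitable_def by blast

lemma cell_of_P:
  assumes "k < n" "C \<in> P k"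
  shows "finite C" "C \<subseteq> V k" "card C > 0"
  using partition_cellD[OF finite_V[OF assms(1)] partition_P[OF assms(1)] assms(2)] by auto

lemma finite_P: "k < n \<Longrightarrow> finite (P k)"
  using finite_partition[OF finite_V partition_P] .

lemma row_sum_prod_cell:
  assumes "Cs \<in> cp_verts n P" "Ds \<in> cp_verts n P" "x \<in> prod_cell n Cs"
  shows "(\<Sum>z\<in>prod_cell n Ds. cp_adj n A x z) = cp_adj n (\<lambda>k. cell_degree (A k)) Cs Ds"
proof -
  have Cs: "length Cs = n" "\<And>k. k < n \<Longrightarrow> Cs ! k \<in> P k" using assms(1) by (auto simp: cp_verts_def)
  have Ds: "length Ds = n" "\<And>k. k < n \<Longrightarrow> Ds ! k \<in> P k" using assms(2) by (auto simp: cp_verts_def)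
  have x: "length x = n" "\<And>k. k < n \<Longrightarrow> x ! k \<in> Cs ! k" using assms(3) by (auto simp: prod_cell_def)
  have "(\<Sum>z\<in>prod_cell n Ds. cp_adj n A x z)
     = (\<Sum>k<n. if \<forall>j<n. j \<noteq> k \<longrightarrow> x ! j \<in> Ds ! j then (\<Sum>w\<in>Ds ! k. A k (x ! k) w) else 0)"
    unfolding prod_cell_eq_cp_verts by (rule sum_cp_adj_row) (use x Ds cell_of_P in auto)
  also have "\<dots> = cp_adj n (\<lambda>k. cell_degree (A k)) Cs Ds"
    unfolding cp_adj_def
  proof (rule sum.cong[OF refl])
    fix k assume "k \<in> {..<n}"
    then have k: "k < n" by simp
    have "x ! j \<in> Ds ! j \<longleftrightarrow> Cs ! j = Ds ! j" if "j < n" for j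
      using partition_cell_eq_iff[OF partition_P Cs(2) Ds(2) x(2), OF that that that that] .
    then have "(\<forall>j<n. j \<noteq> k \<longrightarrow> x ! j \<in> Ds ! j) \<longleftrightarrow> (\<forall>j<n. j \<noteq> k \<longrightarrow> Cs ! j = Ds ! j)"
      by auto
    moreover have "(\<Sum>w\<in>Ds ! k. A k (x ! k) w) = cell_degree (A k) (Cs ! k) (Ds ! k)"
      by (rule equitable_row_sum[OF finite_V[OF k] equitable_P[OF k] Cs(2)[OF k] Ds(2)[OF k] x(2)[OF k]])
    ultimately show "(if \<forall>j<n. j \<noteq> k \<longrightarrow> x ! j \<in> Ds ! j then (\<Sum>w\<in>Ds ! k. A k (x ! k) w) else 0)
      = (if \<forall>j<n. j \<noteq> k \<longrightarrow> Cs ! j = Ds ! j then cell_degree (A k) (Cs ! k) (Ds ! k) else 0)"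
      by (simp only:)
  qed
  finally show ?thesis .
qed

lemma prod_cell_nonempty:
  assumes "Cs \<in> cp_verts n P"
  shows "prod_cell n Cs \<noteq> {}"
proof -
  have "(SOME v. v \<in> Cs ! k) \<in> Cs ! k" if "k < n" for k
  proof -
    have "Cs ! k \<in> P k" using assms that by (simp add: cp_verts_def)
    then have "Cs ! k \<noteq> {}" using cell_of_P(3)[OF that] by fastforce
    then show ?thesis by (simp add: some_in_eq)
  qed
  then have "map (\<lambda>k. SOME v. v \<in> Cs ! k) [0..<n] \<in> prod_cell n Cs"
    using assms unfolding prod_cell_def cp_verts_def by simp
  then show ?thesis by blast
qed

lemma prod_cell_eqI:
  assumes "Cs \<in> cp_verts n P" "Ds \<in> cp_verts n P" "x \<in> prod_cell n Cs" "x \<in> prod_cell n Ds"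
  shows "Cs = Ds"
proof -
  have "Cs ! k = Ds ! k" if "k < n" for k
  proof -
    have "Cs ! k \<in> P k" "Ds ! k \<in> P k" "x ! k \<in> Cs ! k" "x ! k \<in> Ds ! k"
      using assms that by (auto simp: cp_verts_def prod_cell_def)
    then show ?thesis using partition_cell_eq_iff[OF partition_P[OF that]] by blast
  qed
  then show ?thesis using assms(1,2) by (simp add: cp_verts_def list_eq_iff_nth_eq)
qed

lemma bij_betw_prod_cell: "bij_betw (prod_cell n) (cp_verts n P) (prod_partition n P)"
  unfolding bij_betw_def prod_partition_def
proof (intro conjI inj_onI refl)
  fix Cs Ds assume Cs: "Cs \<in> cp_verts n P" and Ds: "Ds \<in> cp_verts n P"
    and eq: "prod_cell n Cs = prod_cell n Ds"
  obtain x where "x \<in> prod_cell n Cs" using prod_cell_nonempty[OF Cs] by blast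
  then show "Cs = Ds" using prod_cell_eqI[OF Cs Ds] eq by simp
qed


lemma is_partition_prod_partition: "is_partition (cp_verts n V) (prod_partition n P)"
  unfolding is_partition_def
proof (intro conjI ballI impI)
  fix C assume "C \<in> prod_partition n P"
  then show "C \<noteq> {}" using prod_cell_nonempty unfolding prod_partition_def by auto
next
  show "\<Union> (prod_partition n P) = cp_verts n V"
  proof (intro set_eqI iffI)
    fix x assume "x \<in> \<Union> (prod_partition n P)"
    then obtain Cs where "Cs \<in> cp_verts n P" "x \<in> prod_cell n Cs"
      unfolding prod_partition_def by auto
    then show "x \<in> cp_verts n V" using cell_of_P(2) unfolding cp_verts_def prod_cell_def by blast
  next
    fix x assume x: "x \<in> cp_verts n V"
    have "\<exists>C. C \<in> P k \<and> x ! k \<in> C" if "k < n" for k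
      using partition_P[OF that] x that unfolding is_partition_def cp_verts_def by auto
    then have "map (\<lambda>k. SOME C. C \<in> P k \<and> x ! k \<in> C) [0..<n] \<in> cp_verts n P"
      "x \<in> prod_cell n (map (\<lambda>k. SOME C. C \<in> P k \<and> x ! k \<in> C) [0..<n])"
      using x unfolding cp_verts_def prod_cell_def by (auto intro: someI2_ex)
    then show "x \<in> \<Union> (prod_partition n P)" unfolding prod_partition_def by auto
  qed
next
  fix C D assume "C \<in> prod_partition n P" "D \<in> prod_partition n P" "C \<noteq> D"
  then show "C \<inter> D = {}" using prod_cell_eqI unfolding prod_partition_def by blast
qed

lemma equitable_prod_partition: "equitable (cp_verts n V) (cp_adj n A) (prod_partition n P)"
  unfolding equitable_def
proof (intro conjI is_partition_prod_partition ballI)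
  fix C D x y assume "C \<in> prod_partition n P" "D \<in> prod_partition n P" "x \<in> C" "y \<in> C"
  then show "(\<Sum>z\<in>D. cp_adj n A x z) = (\<Sum>z\<in>D. cp_adj n A y z)"
    unfolding prod_partition_def using row_sum_prod_cell by auto
qed

lemma cell_degree_prod_cell:
  assumes "Cs \<in> cp_verts n P" "Ds \<in> cp_verts n P"
  shows "cell_degree (cp_adj n A) (prod_cell n Cs) (prod_cell n Ds)
       = cp_adj n (\<lambda>k. cell_degree (A k)) Cs Ds"
proof -
  obtain x where x: "x \<in> prod_cell n Cs" using prod_cell_nonempty[OF assms(1)] by blast
  have "prod_cell n Cs \<in> prod_partition n P" "prod_cell n Ds \<in> prod_partition n P"
    using assms unfolding prod_partition_def by auto
  then show ?thesis
    using equitable_row_sum[OF finite_cp_verts equitable_prod_partition _ _ x] finite_V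
      row_sum_prod_cell[OF assms x] by simp
qed

lemma card_prod_cell_ratio:
  assumes "Cs \<in> cp_verts n P" "Ds \<in> cp_verts n P" "k < n"
    and agree: "\<forall>j<n. j \<noteq> k \<longrightarrow> Cs ! j = Ds ! j"
  shows "real (card (prod_cell n Cs)) / card (prod_cell n Ds) = card (Cs ! k) / card (Ds ! k)"
proof -
  have card: "card (prod_cell n Es) = card (Es ! k) * (\<Prod>j\<in>{..<n} - {k}. card (Es ! j))"
    if "Es \<in> cp_verts n P" for Es
  proof -
    have "card (prod_cell n Es) = (\<Prod>j<n. card (Es ! j))"
      unfolding prod_cell_eq_cp_verts
      by (rule card_cp_verts) (use that cell_of_P(1) in \<open>auto simp: cp_verts_def\<close>)
    then show ?thesis using assms(3) by (simp add: prod.remove)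
  qed
  have "(\<Prod>j\<in>{..<n} - {k}. card (Ds ! j)) = (\<Prod>j\<in>{..<n} - {k}. card (Cs ! j))"
    using agree by (intro prod.cong) auto
  moreover have "(\<Prod>j\<in>{..<n} - {k}. card (Cs ! j)) > 0"
    using assms(1) cell_of_P(3) by (intro prod_pos) (auto simp: cp_verts_def)
  ultimately show ?thesis using card[OF assms(1)] card[OF assms(2)] by simp
qed

lemma qadj_prod_cell:
  assumes "Cs \<in> cp_verts n P" "Ds \<in> cp_verts n P"
  shows "cp_adj n (\<lambda>k. qadj (A k)) Cs Ds = qadj (cp_adj n A) (prod_cell n Cs) (prod_cell n Ds)"
proof -
  have "qadj (cp_adj n A) (prod_cell n Cs) (prod_cell n Ds)
      = sqrt (card (prod_cell n Cs) / card (prod_cell n Ds)) * cp_adj n (\<lambda>k. cell_degree (A k)) Cs Ds"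
    by (simp add: qadj_eq_cell_degree cell_degree_prod_cell[OF assms])
  also have "\<dots> = cp_adj n (\<lambda>k. qadj (A k)) Cs Ds"
    unfolding cp_adj_def sum_distrib_left
    by (intro sum.cong refl) (auto simp: qadj_eq_cell_degree card_prod_cell_ratio[OF assms])
  finally show ?thesis ..
qed

end

lemma prod_cell_singletons: "prod_cell n (map (\<lambda>k. {f k}) [0..<n]) = {map f [0..<n]}"
  unfolding prod_cell_def by (auto intro: nth_equalityI)

theorem corollary1:
  fixes n :: nat and V :: "nat \<Rightarrow> 'a set" and E :: "nat \<Rightarrow> 'a \<Rightarrow> 'a \<Rightarrow> bool"
    and a b :: "nat \<Rightarrow> 'a" and t :: real and P :: "nat \<Rightarrow> 'a set set"
  assumes "n \<ge> 1"
    and graphs: "\<forall>k<n. simple_graph (V k) (E k)"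
    and transfer: "\<forall>k<n. pst (V k) (adj (E k)) (a k) (b k) t \<and> (a k = b k \<longrightarrow> t > 0)"
    and distinct: "\<exists>k<n. a k \<noteq> b k"
    and eq: "\<forall>k<n. equitable (V k) (adj (E k)) (P k)"
    and singletons: "\<forall>k<n. {a k} \<in> P k \<and> {b k} \<in> P k"
  shows "equitable (cp_verts n V) (cp_adj n (\<lambda>k. adj (E k))) (prod_partition n P)
    \<and> bij_betw (prod_cell n) (cp_verts n P) (prod_partition n P)
    \<and> (\<forall>Cs\<in>cp_verts n P. \<forall>Ds\<in>cp_verts n P.
         cp_adj n (\<lambda>k. qadj (adj (E k))) Cs Ds
         = qadj (cp_adj n (\<lambda>k. adj (E k))) (prod_cell n Cs) (prod_cell n Ds))
    \<and> pst (cp_verts n P) (cp_adj n (\<lambda>k. qadj (adj (E k))))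
          (map (\<lambda>k. {a k}) [0..<n]) (map (\<lambda>k. {b k}) [0..<n]) t
    \<and> pst (prod_partition n P) (qadj (cp_adj n (\<lambda>k. adj (E k))))
          (prod_cell n (map (\<lambda>k. {a k}) [0..<n])) (prod_cell n (map (\<lambda>k. {b k}) [0..<n])) t"
proof -
  have finite_graphs: "\<forall>k<n. finite (V k)" using graphs by (simp add: simple_graph_def)
  interpret equitable_family n V "\<lambda>k. adj (E k)" P
    using finite_graphs eq by unfold_locales auto
  have "map (\<lambda>k. {a k}) [0..<n] \<in> cp_verts n P" "map (\<lambda>k. {b k}) [0..<n] \<in> cp_verts n P"
    using singletons by (auto simp: cp_verts_def)
  then have singleton_cells:
    "{map a [0..<n]} \<in> prod_partition n P" "{map b [0..<n]} \<in> prod_partition n P"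
    unfolding prod_partition_def prod_cell_singletons[symmetric] by auto
  have "pst (P k) (qadj (adj (E k))) {a k} {b k} t" if "k < n" for k
    using pst_quotient_iff[of "V k" "adj (E k)" "P k" "a k" "b k" t] finite_graphs eq singletons transfer that
    by blast
  then have pst_product_of_quotients: "pst (cp_verts n P) (cp_adj n (\<lambda>k. qadj (adj (E k))))
      (map (\<lambda>k. {a k}) [0..<n]) (map (\<lambda>k. {b k}) [0..<n]) t"
    using finite_P by (intro pst_cp_adj) auto
  have "pst (cp_verts n V) (cp_adj n (\<lambda>k. adj (E k))) (map a [0..<n]) (map b [0..<n]) t"
    using finite_graphs transfer by (intro pst_cp_adj) auto
  then have "pst (prod_partition n P) (qadj (cp_adj n (\<lambda>k. adj (E k))))
      {map a [0..<n]} {map b [0..<n]} t"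
    using pst_quotient_iff[OF finite_cp_verts[OF finite_graphs] equitable_prod_partition singleton_cells]
    by blast
  then show ?thesis
    using equitable_prod_partition bij_betw_prod_cell qadj_prod_cell pst_product_of_quotients
    by (simp add: prod_cell_singletons)
qed

end
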